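(* For all $\alpha\in\dot\Delta$ and all $\beta'\in\dot\Delta'$, the product $r_\alpha r_{\beta'}$ has infinite order.
   Context: Let $\tau=(1+\sqrt5)/2$, $\tau'=(1-\sqrt5)/2$. Let $\Delta\subset\mathbb{R}^4$ be the set of 120 vectors consisting of: the 8 vectors obtained from $(\pm1,0,0,0)$ by permuting coordinates; the 16 vectors $\frac12(\pm1,\pm1,\pm1,\pm1)$; and the 96 vectors obtained from $\frac12(0,\pm1,\pm\tau',\pm\tau)$ (all sign choices) by even permutations of the coordinates. Let $\Delta'$ be the image of $\Delta$ under the Galois conjugation $\tau\leftrightarrow\tau'$ applied to each coordinate. Put $K=\Delta\cap\Delta'$, $\dot\Delta=\Delta\setminus K$, $\dot\Delta'=\Delta'\setminus K$. For a unit vector $a$, $r_a(x)=x-2(x\cdot a)a$ is the orthogonal reflection in $a$. *)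

theory Defs
  imports "HOL-Analysis.Analysis" "HOL-Combinatorics.Permutations"
begin

definition tau :: real where "tau = (1 + sqrt 5) / 2"
definition tau' :: real where "tau' = (1 - sqrt 5) / 2"

definition Delta :: "(real^4) set" where
  "Delta =
     {v. \<exists>i::4. \<exists>s\<in>{-1, 1::real}. v = (\<chi> j. if j = i then s else 0)}
   \<union> {v. \<exists>s::4 \<Rightarrow> real. (\<forall>j. s j \<in> {-1, 1}) \<and> v = (\<chi> j. s j / 2)}
   \<union> {v. \<exists>s::4 \<Rightarrow> real. \<exists>p::4 \<Rightarrow> 4. (\<forall>j. s j \<in> {-1, 1}) \<and> p permutes UNIV \<and> evenperm p \<and>
          v = (\<chi> j. s j * ((vector [0, 1, tau', tau] :: real^4) $ p j) / 2)}"

definition galois :: "real \<Rightarrow> real" where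
  "galois x = (THE y. \<exists>a\<in>\<rat>. \<exists>b\<in>\<rat>. x = a + b * sqrt 5 \<and> y = a - b * sqrt 5)"

definition Delta' :: "(real^4) set" where
  "Delta' = (\<lambda>v. \<chi> i. galois (v $ i)) ` Delta"

definition K :: "(real^4) set" where "K = Delta \<inter> Delta'"
definition Delta_dot :: "(real^4) set" where "Delta_dot = Delta - K"
definition Delta'_dot :: "(real^4) set" where "Delta'_dot = Delta' - K"

definition reflect :: "real^4 \<Rightarrow> real^4 \<Rightarrow> real^4" where
  "reflect a x = x - (2 * (x \<bullet> a)) *\<^sub>R a"

end

theory Submission
  imports Defs
begin

text \<open>
  Every \<open>\<alpha> \<in> Delta_dot\<close> has the shape \<open>(\<pm>0, \<pm>1, \<pm>\<tau>', \<pm>\<tau>)/2\<close> up to an even permutation,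
  and every \<open>\<beta> \<in> Delta'_dot\<close> is the Galois conjugate of such a vector; both are unit vectors.
  A parity computation in \<open>\<int>[\<tau>]\<close>, whose quotient by \<open>2\<int>[\<tau>]\<close> is the field with four
  elements, shows that \<open>4 (\<alpha> \<bullet> \<beta>)\<close> is odd, i.e. lies in \<open>\<int>[\<tau>] - 2\<int>[\<tau>]\<close>.
  On the plane spanned by \<open>\<alpha>\<close> and \<open>\<beta>\<close>, \<open>(r\<^sub>\<alpha> \<circ> r\<^sub>\<beta>)\<^sup>n \<beta> = p\<^sub>n \<alpha> + q\<^sub>n \<beta>\<close>, where the
  coefficients satisfy a linear recurrence in \<open>c = \<alpha> \<bullet> \<beta>\<close>; the same parity argument shows
  that \<open>2\<cdot>4\<^sup>n p\<^sub>n\<^sub>+\<^sub>1\<close> is odd, so \<open>p\<^sub>n \<noteq> 0\<close> for \<open>n > 0\<close>. But \<open>(r\<^sub>\<alpha> \<circ> r\<^sub>\<beta>)\<^sup>n = id\<close> would give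
  \<open>\<beta> = p\<^sub>n \<alpha> + q\<^sub>n \<beta>\<close>, whence \<open>p\<^sub>n (1 - c\<^sup>2) = 0\<close>, and \<open>c\<^sup>2 \<noteq> 1\<close> because \<open>4c\<close> is odd.
\<close>

section \<open>Irrationality and the ring \<open>\<int>[\<tau>]\<close>\<close>

lemma sqrt_prime_irrational:
  assumes "prime (p::nat)"
  shows "sqrt (real p) \<notin> \<rat>"
proof
  assume "sqrt (real p) \<in> \<rat>"
  then obtain m n :: nat where n: "n \<noteq> 0" and e: "\<bar>sqrt (real p)\<bar> = real m / real n"
    and c: "coprime m n"
    by (rule Rats_abs_nat_div_natE)
  have "sqrt (real p) * real n = real m" using e n by simp
  then have "(sqrt (real p) * real n)^2 = (real m)^2" by simp
  then have "p * n^2 = m^2" by (simp add: power_mult_distrib flip: of_nat_power of_nat_mult)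
  then have "p dvd m" using assms by (metis dvd_triv_left prime_dvd_power)
  then obtain k where "m = p * k" by blast
  with \<open>p * n^2 = m^2\<close> have "n^2 = p * k^2"
    using assms by (simp add: power_mult_distrib power2_eq_square prime_gt_0_nat)
  then have "p dvd n" using assms by (metis dvd_triv_left prime_dvd_power)
  with \<open>p dvd m\<close> c assms show False
    using coprime_common_divisor_nat prime_nat_iff by blast
qed

lemma sqrt5_irrational: "sqrt 5 \<notin> \<rat>"
  using sqrt_prime_irrational[of 5] by simp

lemma irrational_coeffs_unique:
  assumes "x \<notin> \<rat>" "a \<in> \<rat>" "b \<in> \<rat>" "a' \<in> \<rat>" "b' \<in> \<rat>" and "a + b * x = a' + b' * x"
  shows "a = a' \<and> b = b'"
proof (cases "b = b'")
  case True
  then show ?thesis using assms(6) by simp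
next
  case False
  then have "x = (a' - a) / (b - b')" using assms(6) by (simp add: field_simps)
  moreover have "(a' - a) / (b - b') \<in> \<rat>" using assms(2-5) by (intro Rats_divide Rats_diff)
  ultimately show ?thesis using assms(1) by simp
qed

lemma tau_squared: "tau\<^sup>2 = tau + 1"
  unfolding tau_def by (simp add: power2_eq_square field_simps)

lemma tau'_eq: "tau' = 1 - tau"
  unfolding tau_def tau'_def by (simp add: field_simps)

lemma tau_irrational: "tau \<notin> \<rat>"
proof
  assume "tau \<in> \<rat>"
  then have "2 * tau - 1 \<in> \<rat>" by simp
  moreover have "2 * tau - 1 = sqrt 5" unfolding tau_def by (simp add: field_simps)
  ultimately show False using sqrt5_irrational by simp
qed

lemma tau_coeffs_unique:
  fixes a b c d :: int
  assumes "a + b * tau = c + d * tau"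
  shows "a = c \<and> b = d"
  using irrational_coeffs_unique[OF tau_irrational _ _ _ _ assms] by simp

lemma tau_mult_coeffs:
  "(of_int a + of_int b * tau) * (of_int c + of_int d * tau) =
     of_int (a*c + b*d) + of_int (a*d + b*c + b*d) * tau"
proof -
  have "(of_int a + of_int b * tau) * (of_int c + of_int d * tau) =
      of_int a * of_int c + (of_int a * of_int d + of_int b * of_int c) * tau + of_int b * of_int d * tau\<^sup>2"
    by (simp add: algebra_simps power2_eq_square)
  then show ?thesis unfolding tau_squared by (simp add: algebra_simps)
qed

definition Ztau :: "real \<Rightarrow> bool" where
  "Ztau x \<longleftrightarrow> (\<exists>a b :: int. x = of_int a + of_int b * tau)"

definition Ztau2 :: "real \<Rightarrow> bool" where
  "Ztau2 x \<longleftrightarrow> (\<exists>a b :: int. x = 2 * (of_int a + of_int b * tau))"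

definition Ztau_odd :: "real \<Rightarrow> bool" where
  "Ztau_odd x \<longleftrightarrow> Ztau x \<and> \<not> Ztau2 x"

lemma Ztau_of_int: "Ztau (of_int a)"
  unfolding Ztau_def by (rule exI[of _ a], rule exI[of _ 0]) simp

lemma Ztau_numeral: "Ztau (numeral n)"
  using Ztau_of_int[of "numeral n"] by simp

lemma Ztau_add: "Ztau x \<Longrightarrow> Ztau y \<Longrightarrow> Ztau (x + y)"
proof -
  assume "Ztau x" "Ztau y"
  then obtain a b c d :: int where "x = a + b * tau" "y = c + d * tau" unfolding Ztau_def by blast
  then have "x + y = of_int (a + c) + of_int (b + d) * tau" by (simp add: algebra_simps)
  then show ?thesis unfolding Ztau_def by blast
qed

lemma Ztau_mult: "Ztau x \<Longrightarrow> Ztau y \<Longrightarrow> Ztau (x * y)"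
proof -
  assume "Ztau x" "Ztau y"
  then obtain a b c d :: int where "x = a + b * tau" "y = c + d * tau" unfolding Ztau_def by blast
  then show ?thesis unfolding Ztau_def using tau_mult_coeffs by blast
qed

lemma Ztau_minus: "Ztau x \<Longrightarrow> Ztau (- x)"
  using Ztau_mult[OF Ztau_of_int[of "-1"]] by simp

lemma Ztau_diff: "Ztau x \<Longrightarrow> Ztau y \<Longrightarrow> Ztau (x - y)"
  using Ztau_add[of x "- y"] Ztau_minus[of y] by simp

lemma Ztau2_iff_half: "Ztau2 x \<longleftrightarrow> Ztau (x / 2)"
  unfolding Ztau2_def Ztau_def by (auto simp: field_simps)

lemma Ztau2_double: "Ztau x \<Longrightarrow> Ztau2 (2 * x)"
  unfolding Ztau2_iff_half by simp

lemma Ztau2_Ztau: "Ztau2 x \<Longrightarrow> Ztau x"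
  using Ztau_mult[OF Ztau_of_int[of 2], of "x / 2"] unfolding Ztau2_iff_half by simp

lemma Ztau2_zero: "Ztau2 0"
  using Ztau2_double[OF Ztau_of_int[of 0]] by simp

lemma Ztau2_add: "Ztau2 x \<Longrightarrow> Ztau2 y \<Longrightarrow> Ztau2 (x + y)"
  unfolding Ztau2_iff_half using Ztau_add by (simp add: add_divide_distrib)

lemma Ztau2_minus: "Ztau2 x \<Longrightarrow> Ztau2 (- x)"
  unfolding Ztau2_iff_half using Ztau_minus by simp

lemma Ztau2_sum: "(\<And>x. x \<in> A \<Longrightarrow> Ztau2 (f x)) \<Longrightarrow> Ztau2 (sum f A)"
  by (induction A rule: infinite_finite_induct) (simp_all add: Ztau2_zero Ztau2_add)

lemma Ztau_odd_iff:
  "Ztau_odd x \<longleftrightarrow> (\<exists>a b :: int. x = a + b * tau \<and> (odd a \<or> odd b))"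
proof
  assume x: "Ztau_odd x"
  then obtain a b :: int where ab: "x = a + b * tau" unfolding Ztau_odd_def Ztau_def by blast
  have "odd a \<or> odd b"
  proof (rule ccontr)
    assume "\<not> (odd a \<or> odd b)"
    then obtain a' b' where "a = 2 * a'" "b = 2 * b'" by (auto elim!: evenE)
    then have "x = 2 * (a' + b' * tau)" using ab by (simp add: algebra_simps)
    then show False using x unfolding Ztau_odd_def Ztau2_def by blast
  qed
  then show "\<exists>a b :: int. x = a + b * tau \<and> (odd a \<or> odd b)" using ab by blast
next
  assume "\<exists>a b :: int. x = a + b * tau \<and> (odd a \<or> odd b)"
  then obtain a b :: int where ab: "x = a + b * tau" and odd: "odd a \<or> odd b" by blast
  have "\<not> Ztau2 x"
  proof
    assume "Ztau2 x"
    then obtain c d :: int where "x = 2 * (of_int c + of_int d * tau)" unfolding Ztau2_def by blast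
    then have "of_int a + of_int b * tau = of_int (2 * c) + of_int (2 * d) * tau"
      using ab by (simp add: algebra_simps)
    then have "a = 2 * c \<and> b = 2 * d" by (rule tau_coeffs_unique)
    with odd show False by auto
  qed
  then show "Ztau_odd x" using ab unfolding Ztau_odd_def Ztau_def by blast
qed

lemma Ztau_odd_intro: "odd a \<or> odd b \<Longrightarrow> Ztau_odd (of_int a + of_int b * tau)"
  unfolding Ztau_odd_iff by blast

lemma Ztau_odd_Ztau: "Ztau_odd x \<Longrightarrow> Ztau x"
  unfolding Ztau_odd_def by blast

lemma Ztau_odd_nonzero: "Ztau_odd x \<Longrightarrow> x \<noteq> 0"
  using Ztau2_zero unfolding Ztau_odd_def by blast

text \<open>Modulo 2 the norm form \<open>a\<^sup>2 + ab - b\<^sup>2\<close> of \<open>a + b\<tau>\<close> is nonzero unless \<open>a, b\<close> are both even,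
  which is why odd elements are closed under multiplication.\<close>

lemma Ztau_odd_mult:
  assumes "Ztau_odd x" "Ztau_odd y"
  shows "Ztau_odd (x * y)"
proof -
  obtain a b :: int where x: "x = a + b * tau" and ab: "odd a \<or> odd b"
    using assms(1) unfolding Ztau_odd_iff by blast
  obtain c d :: int where y: "y = c + d * tau" and cd: "odd c \<or> odd d"
    using assms(2) unfolding Ztau_odd_iff by blast
  have "odd (a*c + b*d) \<or> odd (a*d + b*c + b*d)"
    using ab cd by (cases "even a"; cases "even b"; cases "even c"; cases "even d"; simp)
  then show ?thesis unfolding x y tau_mult_coeffs by (rule Ztau_odd_intro)
qed

lemma Ztau_odd_add_Ztau2:
  assumes "Ztau_odd x" "Ztau2 y"
  shows "Ztau_odd (x + y)"
proof -
  have "\<not> Ztau2 (x + y)"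
    using assms Ztau2_add[of "x + y" "- y"] Ztau2_minus[of y] unfolding Ztau_odd_def by auto
  then show ?thesis using assms Ztau_add Ztau2_Ztau unfolding Ztau_odd_def by blast
qed

section \<open>Powers of a product of two reflections\<close>

fun rot_coeffs :: "real \<Rightarrow> nat \<Rightarrow> real \<times> real" where
  "rot_coeffs c 0 = (0, 1)"
| "rot_coeffs c (Suc n) =
    ((4*c\<^sup>2 - 1) * fst (rot_coeffs c n) + 2*c * snd (rot_coeffs c n),
     - 2*c * fst (rot_coeffs c n) - snd (rot_coeffs c n))"

lemma reflect_lincomb:
  "reflect a (p *\<^sub>R a + q *\<^sub>R b) = (p - 2 * (p * (a \<bullet> a) + q * (b \<bullet> a))) *\<^sub>R a + q *\<^sub>R b"
  unfolding reflect_def by (simp add: inner_add_left algebra_simps)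

lemma reflect_reflect_lincomb:
  fixes \<alpha> \<beta> :: "real^4"
  assumes "\<alpha> \<bullet> \<alpha> = 1" and "\<beta> \<bullet> \<beta> = 1"
  shows "reflect \<alpha> (reflect \<beta> (p *\<^sub>R \<alpha> + q *\<^sub>R \<beta>)) =
     ((4*(\<alpha> \<bullet> \<beta>)\<^sup>2 - 1) * p + 2*(\<alpha> \<bullet> \<beta>) * q) *\<^sub>R \<alpha> + (- 2*(\<alpha> \<bullet> \<beta>) * p - q) *\<^sub>R \<beta>"
proof -
  let ?c = "\<alpha> \<bullet> \<beta>"
  have "reflect \<beta> (p *\<^sub>R \<alpha> + q *\<^sub>R \<beta>) = reflect \<beta> (q *\<^sub>R \<beta> + p *\<^sub>R \<alpha>)"
    by (simp add: add.commute)
  also have "\<dots> = p *\<^sub>R \<alpha> + (- q - 2 * p * ?c) *\<^sub>R \<beta>"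
    unfolding reflect_lincomb using assms(2) by (simp add: algebra_simps)
  also have "reflect \<alpha> \<dots> = ((4*?c\<^sup>2 - 1) * p + 2*?c * q) *\<^sub>R \<alpha> + (- 2*?c * p - q) *\<^sub>R \<beta>"
    unfolding reflect_lincomb using assms(1) by (simp add: inner_commute algebra_simps power2_eq_square)
  finally show ?thesis .
qed

lemma reflect_comp_reflect_power_apply:
  fixes \<alpha> \<beta> :: "real^4"
  assumes "\<alpha> \<bullet> \<alpha> = 1" and "\<beta> \<bullet> \<beta> = 1"
  shows "((reflect \<alpha> \<circ> reflect \<beta>) ^^ n) \<beta> =
    fst (rot_coeffs (\<alpha> \<bullet> \<beta>) n) *\<^sub>R \<alpha> + snd (rot_coeffs (\<alpha> \<bullet> \<beta>) n) *\<^sub>R \<beta>"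
  by (induction n) (simp_all add: reflect_reflect_lincomb[OF assms])

text \<open>With \<open>4c \<in> \<int>[\<tau>]\<close> the coefficients acquire a factor \<open>1/4\<close> per step; the powers of 4 clear
  these denominators, and the extra factor 2 on the first coefficient makes its leading term
  \<open>(4c)\<^sup>2 \<cdot> 2\<cdot>4\<^sup>n p\<^sub>n\<^sub>+\<^sub>1\<close> odd while all other terms are even.\<close>

lemma rot_coeffs_parity:
  assumes "Ztau_odd (4 * c)"
  shows "Ztau_odd (2 * 4^n * fst (rot_coeffs c (Suc n))) \<and> Ztau (4^n * snd (rot_coeffs c (Suc n)))"
proof (induction n)
  case 0
  show ?case using assms Ztau_of_int[of "-1"] by (simp add: algebra_simps)
next
  case (Suc n)
  define P where "P = 2 * 4^n * fst (rot_coeffs c (Suc n))"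
  define Q where "Q = 4^n * snd (rot_coeffs c (Suc n))"
  define z where "z = 4 * c"
  have P: "Ztau_odd P" and Q: "Ztau Q" using Suc unfolding P_def Q_def by auto
  have z: "Ztau_odd z" using assms unfolding z_def .
  have PZ: "Ztau P" and zZ: "Ztau z" using P z by (simp_all add: Ztau_odd_Ztau)
  have fst_eq: "2 * 4^Suc n * fst (rot_coeffs c (Suc (Suc n))) = z * z * P + 2 * (-2 * P + 2 * z * Q)"
    unfolding P_def Q_def z_def by (simp add: algebra_simps power2_eq_square)
  have snd_eq: "4^Suc n * snd (rot_coeffs c (Suc (Suc n))) = - z * P - 4 * Q"
    unfolding P_def Q_def z_def by (simp add: algebra_simps)
  have "Ztau_odd (z * z * P + 2 * (-2 * P + 2 * z * Q))"
    by (intro Ztau_odd_add_Ztau2 Ztau_odd_mult Ztau2_double Ztau_add Ztau_mult Ztau_minus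
        Ztau_numeral z P zZ PZ Q)
  moreover have "Ztau (- z * P - 4 * Q)"
    by (intro Ztau_diff Ztau_mult Ztau_minus Ztau_numeral zZ PZ Q)
  ultimately show ?case unfolding fst_eq snd_eq by simp
qed

lemma reflect_comp_reflect_power_neq_id:
  fixes \<alpha> \<beta> :: "real^4"
  assumes aa: "\<alpha> \<bullet> \<alpha> = 1" and bb: "\<beta> \<bullet> \<beta> = 1" and odd: "Ztau_odd (4 * (\<alpha> \<bullet> \<beta>))"
    and "n > 0"
  shows "(reflect \<alpha> \<circ> reflect \<beta>) ^^ n \<noteq> id"
proof
  assume T: "(reflect \<alpha> \<circ> reflect \<beta>) ^^ n = id"
  obtain m where m: "n = Suc m" using \<open>n > 0\<close> gr0_implies_Suc by blast
  define c where "c = \<alpha> \<bullet> \<beta>"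
  define p where "p = fst (rot_coeffs c n)"
  define q where "q = snd (rot_coeffs c n)"
  have fixed: "\<beta> = p *\<^sub>R \<alpha> + q *\<^sub>R \<beta>"
    using reflect_comp_reflect_power_apply[OF aa bb, of n] T unfolding p_def q_def c_def by simp
  have "c = p + q * c" using arg_cong[OF fixed, of "inner \<alpha>"] aa
    unfolding c_def by (simp add: inner_add_right)
  moreover have "1 = p * c + q" using arg_cong[OF fixed, of "inner \<beta>"] bb
    unfolding c_def by (simp add: inner_add_right inner_commute)
  ultimately have "p * (1 - c\<^sup>2) = 0" by algebra
  moreover have "c\<^sup>2 \<noteq> 1"
  proof
    assume "c\<^sup>2 = 1"
    then have "4 * c = 2 * (of_int (if c = 1 then 2 else -2) + of_int 0 * tau)"
      by (auto simp: power2_eq_1_iff)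
    then show False using odd unfolding c_def Ztau_odd_def Ztau2_def by blast
  qed
  moreover have "p \<noteq> 0"
    using rot_coeffs_parity[of c m] odd Ztau_odd_nonzero unfolding p_def c_def m by fastforce
  ultimately show False by simp
qed

section \<open>Galois conjugation\<close>

lemma galois_conj:
  assumes "a \<in> \<rat>" and "b \<in> \<rat>"
  shows "galois (a + b * sqrt 5) = a - b * sqrt 5"
  unfolding galois_def
proof (rule the_equality)
  show "\<exists>a'\<in>\<rat>. \<exists>b'\<in>\<rat>. a + b * sqrt 5 = a' + b' * sqrt 5 \<and> a - b * sqrt 5 = a' - b' * sqrt 5"
    using assms by blast
next
  fix y
  assume "\<exists>a'\<in>\<rat>. \<exists>b'\<in>\<rat>. a + b * sqrt 5 = a' + b' * sqrt 5 \<and> y = a' - b' * sqrt 5"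
  then obtain a' b' where "a' \<in> \<rat>" "b' \<in> \<rat>" "a + b * sqrt 5 = a' + b' * sqrt 5" "y = a' - b' * sqrt 5"
    by blast
  with assms irrational_coeffs_unique[OF sqrt5_irrational] show "y = a - b * sqrt 5" by blast
qed

lemma galois_rational: "q \<in> \<rat> \<Longrightarrow> galois q = q"
  using galois_conj[of q 0] by simp

lemma galois_tau_lincomb:
  assumes "a \<in> \<rat>" and "b \<in> \<rat>"
  shows "galois (a + b * tau) = a + b * tau'"
proof -
  have "a + b * tau = (a + b / 2) + (b / 2) * sqrt 5" unfolding tau_def by (simp add: field_simps)
  moreover have "a + b * tau' = (a + b / 2) - (b / 2) * sqrt 5" unfolding tau'_def by (simp add: field_simps)
  moreover have "galois ((a + b / 2) + (b / 2) * sqrt 5) = (a + b / 2) - (b / 2) * sqrt 5"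
    using assms by (intro galois_conj) simp_all
  ultimately show ?thesis by metis
qed

definition conj_vec :: "real^4 \<Rightarrow> real^4" where
  "conj_vec v = (\<chi> i. galois (v $ i))"

lemma Delta'_eq: "Delta' = conj_vec ` Delta"
  unfolding Delta'_def conj_vec_def ..

lemma conj_vec_rational: "(\<And>i. v $ i \<in> \<rat>) \<Longrightarrow> conj_vec v = v"
  unfolding conj_vec_def by (simp add: galois_rational vec_eq_iff)

section \<open>The irrational vectors of \<open>Delta\<close> and \<open>Delta'\<close>\<close>

definition base :: "4 \<Rightarrow> real" where
  "base k = (vector [0, 1, tau', tau] :: real^4) $ k"

definition base' :: "4 \<Rightarrow> real" where
  "base' k = (vector [0, 1, tau, tau'] :: real^4) $ k"

definition signed_perm_vec :: "(4 \<Rightarrow> real) \<Rightarrow> (4 \<Rightarrow> 4) \<Rightarrow> (4 \<Rightarrow> real) \<Rightarrow> real^4" where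
  "signed_perm_vec s p f = (\<chi> j. s j * f (p j) / 2)"

definition base_coeffs :: "4 \<Rightarrow> int \<times> int" where
  "base_coeffs k = (if k = 1 then (0, 0) else if k = 2 then (1, 0) else if k = 3 then (1, -1) else (0, 1))"

lemma base_eq: "base k = of_int (fst (base_coeffs k)) + of_int (snd (base_coeffs k)) * tau"
  using exhaust_4[of k] by (auto simp: base_def base_coeffs_def tau'_eq vector_def)

lemma base'_eq: "base' k = of_int (fst (base_coeffs k)) + of_int (snd (base_coeffs k)) * tau'"
  using exhaust_4[of k] by (auto simp: base'_def base_coeffs_def tau'_eq vector_def)

definition conj_mult_coeffs :: "int \<times> int \<Rightarrow> int \<times> int \<Rightarrow> int \<times> int" where
  "conj_mult_coeffs x y = (fst x * fst y + fst x * snd y - snd x * snd y, snd x * fst y - fst x * snd y)"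

lemma tau_mult_tau'_coeffs:
  "(of_int a + of_int b * tau) * (of_int c + of_int d * tau') =
     of_int (fst (conj_mult_coeffs (a, b) (c, d))) + of_int (snd (conj_mult_coeffs (a, b) (c, d))) * tau"
proof -
  have "(of_int a + of_int b * tau) * (of_int c + of_int d * tau') =
      of_int a * of_int c + of_int a * of_int d + (of_int b * of_int c - of_int a * of_int d) * tau
      + of_int b * of_int d * (tau - tau\<^sup>2)"
    unfolding tau'_eq by (simp add: algebra_simps power2_eq_square)
  then show ?thesis unfolding tau_squared conj_mult_coeffs_def by simp
qed

lemma Ztau_base_mult_base': "Ztau (base k * base' l)"
  unfolding base_eq base'_eq tau_mult_tau'_coeffs Ztau_def by blast

lemma sum_base_mult_base'_eq:
  "(\<Sum>k\<in>UNIV. base k * base' (s k)) =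
     of_int (\<Sum>k\<in>UNIV. fst (conj_mult_coeffs (base_coeffs k) (base_coeffs (s k)))) +
     of_int (\<Sum>k\<in>UNIV. snd (conj_mult_coeffs (base_coeffs k) (base_coeffs (s k)))) * tau"
  unfolding base_eq base'_eq tau_mult_tau'_coeffs by (simp add: sum.distrib sum_distrib_right)

lemma permutes_4_transpositions:
  fixes s :: "4 \<Rightarrow> 4"
  assumes "s permutes UNIV"
  obtains a b c where "b \<noteq> 1" "c \<noteq> 1" "c \<noteq> 2"
    and "s = Transposition.transpose 1 a \<circ> Transposition.transpose 2 b \<circ> Transposition.transpose 3 c"
proof -
  define a where "a = s 1"
  define s1 where "s1 = Transposition.transpose 1 a \<circ> s"
  define b where "b = s1 2"
  define s2 where "s2 = Transposition.transpose 2 b \<circ> s1"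
  define c where "c = s2 3"
  define s3 where "s3 = Transposition.transpose 3 c \<circ> s2"
  have inj: "inj s1" "inj s2" "inj s3"
    using permutes_inj[OF assms] unfolding s1_def s2_def s3_def by (simp_all add: inj_compose inj_transpose)
  have "s1 1 = 1" unfolding s1_def a_def by simp
  then have "b \<noteq> 1" using injD[OF inj(1), of 2 1] unfolding b_def by auto
  then have "s2 1 = 1" "s2 2 = 2" using \<open>s1 1 = 1\<close> unfolding s2_def b_def by auto
  then have "c \<noteq> 1" "c \<noteq> 2" using injD[OF inj(2), of 3 1] injD[OF inj(2), of 3 2] unfolding c_def by auto
  then have s3: "s3 1 = 1" "s3 2 = 2" "s3 3 = 3"
    using \<open>s2 1 = 1\<close> \<open>s2 2 = 2\<close> unfolding s3_def c_def by auto
  moreover have "s3 4 = 4"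
    using exhaust_4[of "s3 4"] s3 injD[OF inj(3), of 4 1] injD[OF inj(3), of 4 2] injD[OF inj(3), of 4 3]
    by auto
  ultimately have "s3 x = x" for x using exhaust_4[of x] by auto
  moreover have "s x = Transposition.transpose 1 a (Transposition.transpose 2 b (Transposition.transpose 3 c (s3 x)))"
    for x unfolding s3_def s2_def s1_def by simp
  ultimately have "s = Transposition.transpose 1 a \<circ> Transposition.transpose 2 b \<circ> Transposition.transpose 3 c"
    by (simp add: fun_eq_iff)
  with \<open>b \<noteq> 1\<close> \<open>c \<noteq> 1\<close> \<open>c \<noteq> 2\<close> show ?thesis by (intro that) auto
qed

lemma sum_base_mult_base'_odd:
  fixes s :: "4 \<Rightarrow> 4"
  assumes "s permutes UNIV" and "evenperm s"
  shows "Ztau_odd (\<Sum>k\<in>UNIV. base k * base' (s k))"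
proof -
  obtain a b c :: 4 where bc: "b \<noteq> 1" "c \<noteq> 1" "c \<noteq> 2"
    and s: "s = Transposition.transpose 1 a \<circ> Transposition.transpose 2 b \<circ> Transposition.transpose 3 c"
    using permutes_4_transpositions[OF assms(1)] by blast
  have "evenperm s \<longleftrightarrow> ((a = 1) = (b = 2)) = (c = 3)"
    unfolding s by (simp add: evenperm_comp permutation_compose permutation_swap_id evenperm_swap)
  with assms(2) have parity: "((a = 1) = (b = 2)) = (c = 3)" by simp
  have "odd (\<Sum>k\<in>UNIV. fst (conj_mult_coeffs (base_coeffs k) (base_coeffs (s k)))) \<or>
        odd (\<Sum>k\<in>UNIV. snd (conj_mult_coeffs (base_coeffs k) (base_coeffs (s k))))"
    using exhaust_4[of a] exhaust_4[of b] exhaust_4[of c] bc parity unfolding s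
    by (elim disjE; simp add: sum_4 base_coeffs_def conj_mult_coeffs_def transpose_def)
  then show ?thesis unfolding sum_base_mult_base'_eq by (rule Ztau_odd_intro)
qed

lemma Delta_cases:
  assumes "v \<in> Delta"
  obtains "\<And>i. v $ i \<in> \<rat>"
  | s p where "\<forall>j. s j \<in> {-1, 1}" "p permutes UNIV" "evenperm p" "v = signed_perm_vec s p base"
proof -
  consider (axis) i and s :: real where "s \<in> {-1, 1}" "v = (\<chi> j. if j = i then s else 0)"
    | (half) s :: "4 \<Rightarrow> real" where "\<forall>j. s j \<in> {-1, 1}" "v = (\<chi> j. s j / 2)"
    | (golden) s p where "\<forall>j. s j \<in> {-1, 1}" "p permutes UNIV" "evenperm p"
          "v = signed_perm_vec s p base"
    using assms unfolding Delta_def signed_perm_vec_def base_def by blast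
  then show ?thesis
  proof cases
    case half
    have "s i \<in> \<rat>" for i using half(1) by (metis Rats_1 Rats_minus_iff insert_iff singletonD)
    then show ?thesis using half(2) that(1) by simp
  qed (use that in auto)
qed

lemma conj_vec_signed_perm_vec:
  assumes "\<forall>j. s j \<in> {-1, 1}"
  shows "conj_vec (signed_perm_vec s p base) = signed_perm_vec s p base'"
proof -
  have "galois (s j * base k / 2) = s j * base' k / 2" for j k
  proof -
    define a b where "a = s j * fst (base_coeffs k) / 2" and "b = s j * snd (base_coeffs k) / 2"
    have "s j \<in> \<rat>" using assms(1)[rule_format, of j] by auto
    then have "galois (a + b * tau) = a + b * tau'"
      unfolding a_def b_def by (intro galois_tau_lincomb) simp_all
    moreover have "s j * base k / 2 = a + b * tau" "s j * base' k / 2 = a + b * tau'"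
      unfolding a_def b_def base_eq base'_eq by (simp_all add: field_simps)
    ultimately show ?thesis by metis
  qed
  then show ?thesis unfolding conj_vec_def signed_perm_vec_def by (simp add: vec_eq_iff)
qed

lemma Delta_dot_obtain:
  assumes "\<alpha> \<in> Delta_dot"
  obtains s p where "\<forall>j. s j \<in> {-1, 1}" "p permutes UNIV" "evenperm p"
    "\<alpha> = signed_perm_vec s p base"
proof -
  have "\<alpha> \<in> Delta" and "\<alpha> \<notin> conj_vec ` Delta"
    using assms unfolding Delta_dot_def K_def Delta'_eq by auto
  moreover have "\<not> (\<forall>i. \<alpha> $ i \<in> \<rat>)"
    using calculation conj_vec_rational[of \<alpha>] by (metis image_eqI)
  ultimately show ?thesis using Delta_cases that by blast
qed

lemma Delta'_dot_obtain:
  assumes "\<beta> \<in> Delta'_dot"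
  obtains s p where "\<forall>j. s j \<in> {-1, 1}" "p permutes UNIV" "evenperm p"
    "\<beta> = signed_perm_vec s p base'"
proof -
  obtain \<gamma> where \<gamma>: "\<gamma> \<in> Delta" "\<beta> = conj_vec \<gamma>" and "\<beta> \<notin> Delta"
    using assms unfolding Delta'_dot_def K_def Delta'_eq by auto
  have "\<not> (\<forall>i. \<gamma> $ i \<in> \<rat>)"
  proof
    assume "\<forall>i. \<gamma> $ i \<in> \<rat>"
    then have "\<beta> = \<gamma>" using \<gamma>(2) conj_vec_rational by simp
    with \<gamma>(1) \<open>\<beta> \<notin> Delta\<close> show False by simp
  qed
  then show ?thesis using Delta_cases[OF \<gamma>(1)] that conj_vec_signed_perm_vec \<gamma>(2) by metis
qed

lemma inner_signed_perm_vec_self: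
  assumes "\<forall>j. s j \<in> {-1, 1}" and "p permutes UNIV" and "(\<Sum>k\<in>UNIV. (f k)\<^sup>2) = 4"
  shows "signed_perm_vec s p f \<bullet> signed_perm_vec s p f = 1"
proof -
  have "s j * s j = 1" for j using assms(1)[rule_format, of j] by auto
  moreover have "signed_perm_vec s p f \<bullet> signed_perm_vec s p f = (\<Sum>j\<in>UNIV. (s j * s j) * (f (p j))\<^sup>2 / 4)"
    unfolding inner_vec_def signed_perm_vec_def by (simp add: power2_eq_square algebra_simps)
  ultimately have "signed_perm_vec s p f \<bullet> signed_perm_vec s p f = (\<Sum>j\<in>UNIV. (f (p j))\<^sup>2 / 4)"
    by simp
  also have "\<dots> = (\<Sum>k\<in>UNIV. (f k)\<^sup>2 / 4)"
    using sum.permute[OF assms(2), of "\<lambda>k. (f k)\<^sup>2 / 4"] by (simp add: comp_def)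
  finally show ?thesis using assms(3) by (simp add: sum_divide_distrib[symmetric])
qed

lemma sum_base_squares: "(\<Sum>k\<in>UNIV. (base k)\<^sup>2) = 4"
  and sum_base'_squares: "(\<Sum>k\<in>UNIV. (base' k)\<^sup>2) = 4"
proof -
  have "tau'\<^sup>2 + tau\<^sup>2 = 3" unfolding tau'_eq using tau_squared by (simp add: power2_eq_square algebra_simps)
  then show "(\<Sum>k\<in>UNIV. (base k)\<^sup>2) = 4" "(\<Sum>k\<in>UNIV. (base' k)\<^sup>2) = 4"
    by (simp_all add: sum_4 base_def base'_def vector_def)
qed

lemma four_inner_signed_perm_vec_odd:
  assumes s: "\<forall>j. s j \<in> {-1, 1}" and p: "p permutes UNIV" "evenperm p"
    and s': "\<forall>j. s' j \<in> {-1, 1}" and p': "p' permutes UNIV" "evenperm p'"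
  shows "Ztau_odd (4 * (signed_perm_vec s p base \<bullet> signed_perm_vec s' p' base'))"
proof -
  define X where "X j = base (p j) * base' (p' j)" for j
  have "4 * (signed_perm_vec s p base \<bullet> signed_perm_vec s' p' base') = (\<Sum>j\<in>UNIV. s j * s' j * X j)"
    unfolding inner_vec_def signed_perm_vec_def X_def by (simp add: sum_distrib_left algebra_simps)
  also have "\<dots> = (\<Sum>j\<in>UNIV. X j) + (\<Sum>j\<in>UNIV. (s j * s' j - 1) * X j)"
    by (simp add: sum.distrib[symmetric] algebra_simps)
  finally have split: "4 * (signed_perm_vec s p base \<bullet> signed_perm_vec s' p' base') =
      (\<Sum>j\<in>UNIV. X j) + (\<Sum>j\<in>UNIV. (s j * s' j - 1) * X j)" .
  define \<sigma> where "\<sigma> = p' \<circ> inv p"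
  have perms: "permutation p" "permutation p'"
    using p(1) p'(1) by (simp_all add: permutes_imp_permutation)
  have \<sigma>: "\<sigma> permutes UNIV" "evenperm \<sigma>"
    unfolding \<sigma>_def using p p' perms
    by (simp_all add: permutes_compose permutes_inv evenperm_comp permutation_inverse evenperm_inv)
  have "(\<Sum>k\<in>UNIV. base k * base' (\<sigma> k)) = (\<Sum>j\<in>UNIV. X j)"
    using sum.permute[OF p(1), of "\<lambda>k. base k * base' (\<sigma> k)"]
    unfolding X_def \<sigma>_def by (simp add: permutes_inverses[OF p(1)])
  then have "Ztau_odd (\<Sum>j\<in>UNIV. X j)" using sum_base_mult_base'_odd[OF \<sigma>] by simp
  moreover have "Ztau2 (\<Sum>j\<in>UNIV. (s j * s' j - 1) * X j)"
  proof (rule Ztau2_sum)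
    fix j
    have "s j * s' j - 1 \<in> {0, -2}" using s[rule_format, of j] s'[rule_format, of j] by auto
    moreover have "Ztau2 (-2 * X j)"
      using Ztau2_double[OF Ztau_minus[OF Ztau_base_mult_base'[of "p j" "p' j"]]] by (simp add: X_def)
    ultimately show "Ztau2 ((s j * s' j - 1) * X j)"
      using Ztau2_zero by (metis empty_iff insert_iff mult_zero_left)
  qed
  ultimately show ?thesis unfolding split by (rule Ztau_odd_add_Ztau2)
qed

theorem mainTheorem3:
  assumes "\<alpha> \<in> Delta_dot" and "\<beta> \<in> Delta'_dot"
  shows "\<forall>n::nat. n > 0 \<longrightarrow> (reflect \<alpha> \<circ> reflect \<beta>) ^^ n \<noteq> id"
proof -
  obtain s p where s: "\<forall>j. s j \<in> {-1, 1}" and p: "p permutes UNIV" "evenperm p"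
    and \<alpha>: "\<alpha> = signed_perm_vec s p base"
    using Delta_dot_obtain[OF assms(1)] .
  obtain s' p' where s': "\<forall>j. s' j \<in> {-1, 1}" and p': "p' permutes UNIV" "evenperm p'"
    and \<beta>: "\<beta> = signed_perm_vec s' p' base'"
    using Delta'_dot_obtain[OF assms(2)] .
  have "\<alpha> \<bullet> \<alpha> = 1" unfolding \<alpha> using inner_signed_perm_vec_self[OF s p(1) sum_base_squares] .
  moreover have "\<beta> \<bullet> \<beta> = 1" unfolding \<beta> using inner_signed_perm_vec_self[OF s' p'(1) sum_base'_squares] .
  moreover have "Ztau_odd (4 * (\<alpha> \<bullet> \<beta>))"
    unfolding \<alpha> \<beta> using four_inner_signed_perm_vec_odd[OF s p s' p'] .
  ultimately show ?thesis using reflect_comp_reflect_power_neq_id by blast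
qed

end
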